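(* Let $d\ge2$ and let $a_1,\ldots,a_d>1$ be real numbers with $\frac1{a_1}+\cdots+\frac1{a_d}=1$. Let $S=\operatorname{conv}(\{0,a_1e_1,\ldots,a_de_d\})\subseteq\mathbb{R}^d$. Then for $v\in\mathbb{R}^d$, the translate $S+v$ contains no integral point in its interior if and only if $v\in\mathbb{Z}^d$.
   Context: $e_1,\ldots,e_d$ are the standard unit vectors of $\mathbb{R}^d$. *)

theory Defs
  imports "HOL-Analysis.Analysis"
begin

definition integral_point :: "real ^ 'n \<Rightarrow> bool" where
  "integral_point x \<longleftrightarrow> (\<forall>i. x $ i \<in> \<int>)"

definition coord_simplex :: "(real ^ 'n) \<Rightarrow> (real ^ 'n) set" where
  "coord_simplex a = convex hull (insert 0 {a $ i *\<^sub>R axis i 1 | i. True})"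

end

theory Submission
  imports Defs
begin

text \<open>Both the simplex and its interior are cut out by coordinatewise sign conditions and one
linear inequality: the interior of the simplex is \<open>{w. w > 0 \<and> \<Sum>i. w\<^sub>i / a\<^sub>i < 1}\<close>.
If \<open>v\<close> is integral, an integral point \<open>v + w\<close> of the translated interior has \<open>w\<close> integral and
positive, hence \<open>w\<^sub>i \<ge> 1\<close> and \<open>\<Sum>i. w\<^sub>i / a\<^sub>i \<ge> \<Sum>i. 1 / a\<^sub>i = 1\<close>, impossible.
If \<open>v\<close> is not integral, the integral point \<open>\<lfloor>v\<rfloor> + 1\<close> works: \<open>w = \<lfloor>v\<rfloor> + 1 - v\<close> lies in \<open>(0,1]\<^sup>d\<close>
and has some coordinate below \<open>1\<close>, so \<open>\<Sum>i. w\<^sub>i / a\<^sub>i < 1\<close>.\<close>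

lemma interior_orthant_Int_halfspace_le:
  fixes c :: "real ^ 'n"
  assumes "c \<noteq> 0"
  shows "interior {x. (\<forall>i. 0 \<le> x $ i) \<and> c \<bullet> x \<le> b} = {x. (\<forall>i. 0 < x $ i) \<and> c \<bullet> x < b}"
proof
  have "interior {x. (\<forall>i. 0 \<le> x $ i) \<and> c \<bullet> x \<le> b} \<subseteq> interior {x. 0 \<le> x $ i}" for i
    by (rule interior_mono) auto
  moreover have "interior {x. (\<forall>i. 0 \<le> x $ i) \<and> c \<bullet> x \<le> b} \<subseteq> interior {x. c \<bullet> x \<le> b}"
    by (rule interior_mono) auto
  ultimately show "interior {x. (\<forall>i. 0 \<le> x $ i) \<and> c \<bullet> x \<le> b} \<subseteq> {x. (\<forall>i. 0 < x $ i) \<and> c \<bullet> x < b}"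
    using assms by fastforce
next
  have "open {x :: real ^ 'n. (\<forall>i. 0 < x $ i) \<and> c \<bullet> x < b}"
    unfolding Collect_conj_eq Collect_all_eq
    by (intro open_Int open_INT open_Collect_less continuous_intros)
      (auto simp: open_halfspace_component_gt_cart)
  then show "{x. (\<forall>i. 0 < x $ i) \<and> c \<bullet> x < b} \<subseteq> interior {x. (\<forall>i. 0 \<le> x $ i) \<and> c \<bullet> x \<le> b}"
    by (intro interior_maximal) (auto intro: less_imp_le)
qed

lemma convex_hull_insert_0_range:
  fixes g :: "'i::finite \<Rightarrow> 'a::real_vector"
  assumes "inj g" and "0 \<notin> range g"
  shows "convex hull (insert 0 (range g))
           = {y. \<exists>w. (\<forall>i. 0 \<le> w i) \<and> sum w UNIV \<le> 1 \<and> (\<Sum>i\<in>UNIV. w i *\<^sub>R g i) = y}"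
proof -
  have "convex hull (insert 0 (range g))
          = {y. \<exists>u. (\<forall>p\<in>range g. 0 \<le> u p) \<and> sum u (range g) \<le> 1 \<and> (\<Sum>p\<in>range g. u p *\<^sub>R p) = y}"
    using assms(2) by (intro Starlike.simplex) auto
  also have "\<dots> = {y. \<exists>w. (\<forall>i. 0 \<le> w i) \<and> sum w UNIV \<le> 1 \<and> (\<Sum>i\<in>UNIV. w i *\<^sub>R g i) = y}"
  proof (intro Collect_cong iffI; elim exE)
    fix y u assume "(\<forall>p\<in>range g. 0 \<le> u p) \<and> sum u (range g) \<le> 1 \<and> (\<Sum>p\<in>range g. u p *\<^sub>R p) = y"
    then show "\<exists>w. (\<forall>i. 0 \<le> w i) \<and> sum w UNIV \<le> 1 \<and> (\<Sum>i\<in>UNIV. w i *\<^sub>R g i) = y"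
      by (intro exI[of _ "u \<circ> g"]) (simp add: sum.reindex[OF \<open>inj g\<close>])
  next
    fix y w assume "(\<forall>i. 0 \<le> w i) \<and> sum w UNIV \<le> 1 \<and> (\<Sum>i\<in>UNIV. w i *\<^sub>R g i) = y"
    then show "\<exists>u. (\<forall>p\<in>range g. 0 \<le> u p) \<and> sum u (range g) \<le> 1 \<and> (\<Sum>p\<in>range g. u p *\<^sub>R p) = y"
      by (intro exI[of _ "w \<circ> inv g"]) (simp add: sum.reindex[OF \<open>inj g\<close>] \<open>inj g\<close>)
  qed
  finally show ?thesis .
qed

lemma coord_simplex_eq:
  fixes a :: "real ^ 'n"
  assumes a_pos: "\<And>i. a $ i > 0"
  shows "coord_simplex a = {x. (\<forall>i. 0 \<le> x $ i) \<and> (\<Sum>i\<in>UNIV. x $ i / a $ i) \<le> 1}"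
proof -
  define g where "g i = a $ i *\<^sub>R axis i (1::real)" for i
  have comb: "(\<Sum>i\<in>UNIV. w i *\<^sub>R g i) $ k = w k * a $ k" for w k
    by (simp add: g_def axis_def if_distrib cong: if_cong)
  have "inj g"
  proof (rule injI)
    fix i j assume "g i = g j"
    then have "g i $ i = g j $ i" by simp
    then show "i = j" using a_pos[of i] by (auto simp: g_def axis_def split: if_splits)
  qed
  have "coord_simplex a = convex hull (insert 0 (range g))"
    by (simp add: coord_simplex_def g_def full_SetCompr_eq)
  also have "\<dots> = {y. \<exists>w. (\<forall>i. 0 \<le> w i) \<and> sum w UNIV \<le> 1 \<and> (\<Sum>i\<in>UNIV. w i *\<^sub>R g i) = y}"
    using \<open>inj g\<close> a_pos
    by (intro convex_hull_insert_0_range) (auto simp: g_def axis_eq_0_iff less_imp_neq[symmetric])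
  also have "\<dots> = {x. (\<forall>i. 0 \<le> x $ i) \<and> (\<Sum>i\<in>UNIV. x $ i / a $ i) \<le> 1}"
  proof (intro Collect_cong iffI)
    fix y assume "\<exists>w. (\<forall>i. 0 \<le> w i) \<and> sum w UNIV \<le> 1 \<and> (\<Sum>i\<in>UNIV. w i *\<^sub>R g i) = y"
    then obtain w where "\<forall>i. 0 \<le> w i" "sum w UNIV \<le> 1" "y = (\<Sum>i\<in>UNIV. w i *\<^sub>R g i)"
      by blast
    moreover have "y $ i = w i * a $ i" for i
      unfolding \<open>y = _\<close> by (rule comb)
    ultimately show "(\<forall>i. 0 \<le> y $ i) \<and> (\<Sum>i\<in>UNIV. y $ i / a $ i) \<le> 1"
      using a_pos by (simp add: less_imp_neq[symmetric] less_imp_le)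
  next
    fix x assume x: "(\<forall>i. 0 \<le> x $ i) \<and> (\<Sum>i\<in>UNIV. x $ i / a $ i) \<le> 1"
    have "(\<Sum>i\<in>UNIV. (x $ i / a $ i) *\<^sub>R g i) $ k = x $ k" for k
      unfolding comb using a_pos[of k] by simp
    then have "(\<Sum>i\<in>UNIV. (x $ i / a $ i) *\<^sub>R g i) = x"
      by (simp add: vec_eq_iff)
    with x a_pos show "\<exists>w. (\<forall>i. 0 \<le> w i) \<and> sum w UNIV \<le> 1 \<and> (\<Sum>i\<in>UNIV. w i *\<^sub>R g i) = x"
      by (intro exI[of _ "\<lambda>i. x $ i / a $ i"]) (auto intro: divide_nonneg_pos)
  qed
  finally show ?thesis .
qed

lemma interior_coord_simplex:
  fixes a :: "real ^ 'n"
  assumes a_pos: "\<And>i. a $ i > 0"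
  shows "interior (coord_simplex a) = {x. (\<forall>i. 0 < x $ i) \<and> (\<Sum>i\<in>UNIV. x $ i / a $ i) < 1}"
proof -
  have sum_eq_inner: "(\<Sum>i\<in>UNIV. x $ i / a $ i) = (\<chi> i. 1 / a $ i) \<bullet> x" for x :: "real ^ 'n"
    by (simp add: inner_vec_def)
  have "(\<chi> i. 1 / a $ i) \<noteq> 0"
    using a_pos by (auto simp: vec_eq_iff less_imp_neq[symmetric])
  then show ?thesis
    by (simp add: coord_simplex_eq[OF a_pos] sum_eq_inner interior_orthant_Int_halfspace_le)
qed

lemma integral_point_diff:
  "integral_point x \<Longrightarrow> integral_point y \<Longrightarrow> integral_point (x - y)"
  by (simp add: integral_point_def Ints_diff)

lemma sum_inverse_le_sum_divide_integral_point:
  fixes a w :: "real ^ 'n"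
  assumes "\<And>i. a $ i > 0" and "integral_point w" and "\<And>i. 0 < w $ i"
  shows "(\<Sum>i\<in>UNIV. 1 / a $ i) \<le> (\<Sum>i\<in>UNIV. w $ i / a $ i)"
proof (intro sum_mono divide_right_mono)
  fix i
  show "1 \<le> w $ i"
    using assms(2) assms(3)[of i] Ints_nonzero_abs_ge1[of "w $ i"] by (simp add: integral_point_def)
  show "0 \<le> a $ i"
    using assms(1)[of i] by simp
qed

lemma exists_integral_point_above_sum_divide_less:
  fixes a v :: "real ^ 'n"
  assumes a_pos: "\<And>i. a $ i > 0" and "\<not> integral_point v"
  obtains z where "integral_point z" and "\<And>i. v $ i < z $ i"
    and "(\<Sum>i\<in>UNIV. (z $ i - v $ i) / a $ i) < (\<Sum>i\<in>UNIV. 1 / a $ i)"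
proof
  define z :: "real ^ 'n" where "z = (\<chi> i. of_int \<lfloor>v $ i\<rfloor> + 1)"
  show "integral_point z"
    by (simp add: integral_point_def z_def)
  show "v $ i < z $ i" for i
    by (simp add: z_def)
  obtain j where "v $ j \<notin> \<int>"
    using assms(2) by (auto simp: integral_point_def)
  then have "z $ j - v $ j < 1"
    by (auto simp: z_def order.strict_iff_order)
  show "(\<Sum>i\<in>UNIV. (z $ i - v $ i) / a $ i) < (\<Sum>i\<in>UNIV. 1 / a $ i)"
  proof (rule sum_strict_mono_ex1)
    have "z $ i - v $ i \<le> 1" for i
      by (simp add: z_def)
    then show "\<forall>i\<in>UNIV. (z $ i - v $ i) / a $ i \<le> 1 / a $ i"
      using a_pos by (simp add: divide_right_mono less_imp_le)
    show "\<exists>i\<in>UNIV. (z $ i - v $ i) / a $ i < 1 / a $ i"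
      using \<open>z $ j - v $ j < 1\<close> a_pos[of j] divide_strict_right_mono by blast
  qed simp
qed

theorem mainTheorem17:
  fixes a v :: "real ^ 'n"
  assumes "CARD('n) \<ge> 2"
    and "\<And>i. a $ i > 1"
    and "(\<Sum>i\<in>UNIV. 1 / a $ i) = 1"
  shows "(\<not> (\<exists>x\<in>interior ((\<lambda>y. y + v) ` coord_simplex a). integral_point x))
         \<longleftrightarrow> integral_point v"
proof -
  have a_pos: "\<And>i. a $ i > 0"
    using assms(2) less_trans zero_less_one by blast
  have "(\<lambda>y. y + v) ` coord_simplex a = (+) v ` coord_simplex a"
    by (simp add: add.commute)
  then have "(\<exists>x\<in>interior ((\<lambda>y. y + v) ` coord_simplex a). integral_point x)
      \<longleftrightarrow> (\<exists>w. (\<forall>i. 0 < w $ i) \<and> (\<Sum>i\<in>UNIV. w $ i / a $ i) < 1 \<and> integral_point (v + w))"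
    by (auto simp: interior_translation interior_coord_simplex[OF a_pos])
  also have "\<dots> \<longleftrightarrow> \<not> integral_point v"
  proof
    assume "\<exists>w. (\<forall>i. 0 < w $ i) \<and> (\<Sum>i\<in>UNIV. w $ i / a $ i) < 1 \<and> integral_point (v + w)"
    then obtain w where w_pos: "\<And>i. 0 < w $ i" and "(\<Sum>i\<in>UNIV. w $ i / a $ i) < 1"
      and "integral_point (v + w)"
      by blast
    then show "\<not> integral_point v"
      using integral_point_diff[of "v + w" v] assms(3)
        sum_inverse_le_sum_divide_integral_point[OF a_pos _ w_pos] by auto
  next
    assume "\<not> integral_point v"
    then obtain z where "integral_point z" "\<And>i. v $ i < z $ i"
      "(\<Sum>i\<in>UNIV. (z $ i - v $ i) / a $ i) < 1"
      using exists_integral_point_above_sum_divide_less[OF a_pos] assms(3) by metis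
    then show "\<exists>w. (\<forall>i. 0 < w $ i) \<and> (\<Sum>i\<in>UNIV. w $ i / a $ i) < 1 \<and> integral_point (v + w)"
      by (intro exI[of _ "z - v"]) auto
  qed
  finally show ?thesis
    by blast
qed

end
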